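(* Let $T$ be a complete theory with $SOP_3$, witnessed by an indiscernible sequence $\langle a_i:i<\omega\rangle$ and formulas $\varphi(x;y),\psi(x;y)$ satisfying: (1) $\{\varphi(x;y),\psi(x;y)\}$ is contradictory; (2) there is a sequence $\langle c_j:j<\omega\rangle$ with $\varphi(c_j;a_i)$ whenever $i\le j$ and $\psi(c_j;a_i)$ whenever $i>j$; (3) if $i<j$ then $\{\varphi(x;a_j),\psi(x;a_i)\}$ is contradictory. Then the formula $\rho(x;y,z):=\varphi(x;y)\wedge\psi(x;z)$ has the $\infty$-compatible order property on some set $A'\subseteq P_1$ (where $\langle P_n\rangle$ is the characteristic sequence of $\rho$), and $A'$ can be chosen so that the characteristic sequence restricted to $A'$ has support $2$.
   Context: Work in a sufficiently saturated model of $T$. For a formula $\rho(x;w)$ its characteristic sequence is $P_n(w_1,\dots,w_n):=\exists x\bigwedge_{i\le n}\rho(x;w_i)$ (here $w=(y,z)$). $\rho$ has the $\infty$-compatible order property on $A'\subseteq P_1$ if there exist $\langle \alpha_i,\beta_i:i<\omega\rangle$ in $A'$ such that for all $m<\omega$ and all indices, $P_{2m}(\alpha_{i_1},\beta_{j_1},\dots,\alpha_{i_m},\beta_{j_m})$ holds iff $\max\{i_1,\dots,i_m\}<\min\{j_1,\dots,j_m\}$. The sequence restricted to $A'$ has support $2$ if for all $n$ and all $w_1,\dots,w_n\in A'$, $P_n(w_1,\dots,w_n)$ holds iff $P_2(w_i,w_j)$ holds for all $i,j\le n$. *)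

theory Defs
  imports Main "HOL-Library.Countable_Set"
begin

datatype 'f trm = Var nat | Fun 'f "'f trm list"

datatype ('f, 'p) fm =
    Bot
  | Atom 'p "'f trm list"
  | Eq "'f trm" "'f trm"
  | Neg "('f, 'p) fm"
  | Conj "('f, 'p) fm" "('f, 'p) fm"
  | Ex nat "('f, 'p) fm"

text \<open>A structure with universe the whole type 'a (hence nonempty).
  Symbols are interpreted on argument lists of every length.\<close>
record ('f, 'p, 'a) struc =
  FnI :: "'f \<Rightarrow> 'a list \<Rightarrow> 'a"
  RlI :: "'p \<Rightarrow> 'a list \<Rightarrow> bool"

fun evalt :: "('f \<Rightarrow> 'a list \<Rightarrow> 'a) \<Rightarrow> (nat \<Rightarrow> 'a) \<Rightarrow> 'f trm \<Rightarrow> 'a" where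
  "evalt F e (Var n) = e n"
| "evalt F e (Fun f ts) = F f (map (evalt F e) ts)"

fun fvt :: "'f trm \<Rightarrow> nat set" where
  "fvt (Var n) = {n}"
| "fvt (Fun f ts) = (\<Union>t\<in>set ts. fvt t)"

fun fv :: "('f, 'p) fm \<Rightarrow> nat set" where
  "fv Bot = {}"
| "fv (Atom p ts) = (\<Union>t\<in>set ts. fvt t)"
| "fv (Eq s t) = fvt s \<union> fvt t"
| "fv (Neg \<phi>) = fv \<phi>"
| "fv (Conj \<phi> \<psi>) = fv \<phi> \<union> fv \<psi>"
| "fv (Ex x \<phi>) = fv \<phi> - {x}"

fun sat :: "('f, 'p, 'a, 'b) struc_scheme \<Rightarrow> (nat \<Rightarrow> 'a) \<Rightarrow> ('f, 'p) fm \<Rightarrow> bool" where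
  "sat M e Bot = False"
| "sat M e (Atom p ts) = RlI M p (map (evalt (FnI M) e) ts)"
| "sat M e (Eq s t) = (evalt (FnI M) e s = evalt (FnI M) e t)"
| "sat M e (Neg \<phi>) = (\<not> sat M e \<phi>)"
| "sat M e (Conj \<phi> \<psi>) = (sat M e \<phi> \<and> sat M e \<psi>)"
| "sat M e (Ex x \<phi>) = (\<exists>a. sat M (e(x := a)) \<phi>)"

definition holds :: "('f, 'p, 'a, 'b) struc_scheme \<Rightarrow> ('f, 'p) fm \<Rightarrow> 'a list \<Rightarrow> bool" where
  "holds M \<theta> vs = sat M (\<lambda>i. if i < length vs then vs ! i else undefined) \<theta>"

text \<open>A pair \<open>(\<theta>, b)\<close> stands for \<open>\<theta>(x; b)\<close>.\<close>
definition aleph1_saturated :: "('f, 'p, 'a, 'b) struc_scheme \<Rightarrow> bool" where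
  "aleph1_saturated M \<longleftrightarrow>
     (\<forall>(n::nat) (\<Sigma> :: (('f, 'p) fm \<times> 'a list) set).
        countable (\<Union>(\<theta>, b)\<in>\<Sigma>. set b) \<longrightarrow>
        (\<forall>F \<subseteq> \<Sigma>. finite F \<longrightarrow>
            (\<exists>c. length c = n \<and> (\<forall>(\<theta>, b)\<in>F. holds M \<theta> (c @ b)))) \<longrightarrow>
        (\<exists>c. length c = n \<and> (\<forall>(\<theta>, b)\<in>\<Sigma>. holds M \<theta> (c @ b))))"

definition indiscernible ::
  "('f, 'p, 'a, 'b) struc_scheme \<Rightarrow> nat \<Rightarrow> (nat \<Rightarrow> 'a list) \<Rightarrow> bool" where
  "indiscernible M k a \<longleftrightarrow>
     (\<forall>i. length (a i) = k) \<and>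
     (\<forall>(\<theta> :: ('f, 'p) fm) (is :: nat list) (js :: nat list).
        length is = length js \<longrightarrow> sorted_wrt (<) is \<longrightarrow> sorted_wrt (<) js \<longrightarrow>
        fv \<theta> \<subseteq> {..< length is * k} \<longrightarrow>
        (holds M \<theta> (concat (map a is)) \<longleftrightarrow> holds M \<theta> (concat (map a js))))"

text \<open>Here \<open>x\<close> has length \<open>nx\<close>, \<open>y\<close> and \<open>z\<close> have length \<open>ny\<close>;
  a parameter \<open>w = (y, z)\<close> is a pair of \<open>ny\<close>-tuples.\<close>
definition rho ::
  "('f, 'p, 'a, 'b) struc_scheme \<Rightarrow> ('f, 'p) fm \<Rightarrow> ('f, 'p) fm \<Rightarrow> 'a list \<Rightarrow> 'a list \<times> 'a list \<Rightarrow> bool" where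
  "rho M \<phi> \<psi> c w \<longleftrightarrow> holds M \<phi> (c @ fst w) \<and> holds M \<psi> (c @ snd w)"

text \<open>\<open>charP \<dots> ws\<close> is \<open>P\<^sub>n(w\<^sub>1,\<dots>,w\<^sub>n)\<close> for \<open>ws = [w\<^sub>1,\<dots>,w\<^sub>n]\<close>:
  \<open>\<exists>x. \<And>\<^sub>i \<rho>(x; w\<^sub>i)\<close>.\<close>
definition charP ::
  "('f, 'p, 'a, 'b) struc_scheme \<Rightarrow> nat \<Rightarrow> ('f, 'p) fm \<Rightarrow> ('f, 'p) fm \<Rightarrow> ('a list \<times> 'a list) list \<Rightarrow> bool" where
  "charP M nx \<phi> \<psi> ws \<longleftrightarrow> (\<exists>c. length c = nx \<and> (\<forall>w\<in>set ws. rho M \<phi> \<psi> c w))"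

definition P1 ::
  "('f, 'p, 'a, 'b) struc_scheme \<Rightarrow> nat \<Rightarrow> nat \<Rightarrow> ('f, 'p) fm \<Rightarrow> ('f, 'p) fm \<Rightarrow> ('a list \<times> 'a list) set" where
  "P1 M nx ny \<phi> \<psi> = {w. length (fst w) = ny \<and> length (snd w) = ny \<and> charP M nx \<phi> \<psi> [w]}"

text \<open>\<open>\<infinity>\<close>-compatible order property on \<open>A'\<close> (for \<open>m \<ge> 1\<close>; the case
  \<open>m = 0\<close> is degenerate).\<close>
definition inf_cop_on ::
  "('f, 'p, 'a, 'b) struc_scheme \<Rightarrow> nat \<Rightarrow> ('f, 'p) fm \<Rightarrow> ('f, 'p) fm \<Rightarrow> ('a list \<times> 'a list) set \<Rightarrow> bool" where
  "inf_cop_on M nx \<phi> \<psi> A' \<longleftrightarrow>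
     (\<exists>\<alpha> \<beta> :: nat \<Rightarrow> 'a list \<times> 'a list.
        (\<forall>i. \<alpha> i \<in> A' \<and> \<beta> i \<in> A') \<and>
        (\<forall>(is :: nat list) (js :: nat list).
           length is = length js \<longrightarrow> is \<noteq> [] \<longrightarrow>
           (charP M nx \<phi> \<psi> (concat (map2 (\<lambda>i j. [\<alpha> i, \<beta> j]) is js))
              \<longleftrightarrow> Max (set is) < Min (set js))))"

definition support2_on ::
  "('f, 'p, 'a, 'b) struc_scheme \<Rightarrow> nat \<Rightarrow> ('f, 'p) fm \<Rightarrow> ('f, 'p) fm \<Rightarrow> ('a list \<times> 'a list) set \<Rightarrow> bool" where
  "support2_on M nx \<phi> \<psi> A' \<longleftrightarrow>
     (\<forall>ws. set ws \<subseteq> A' \<longrightarrow>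
        (charP M nx \<phi> \<psi> ws \<longleftrightarrow> (\<forall>u\<in>set ws. \<forall>v\<in>set ws. charP M nx \<phi> \<psi> [u, v])))"

end

theory Submission
  imports Defs "HOL-Library.Extended_Nat"
begin

text \<open>By saturation there is a tuple \<open>b\<close> with \<open>\<psi>(c\<^sub>j; b)\<close> for every \<open>j\<close>; it plays the
  role of \<open>a\<^sub>\<infinity>\<close>.  Put \<open>e(l) = a\<^sub>l\<close> for \<open>l < \<omega>\<close> and \<open>e(\<infinity>) = b\<close>, and take as parameters
  the pairs \<open>(e(k), e(l))\<close> with \<open>k < l \<le> \<infinity>\<close>.  A set of such pairs is consistent with
  \<open>\<rho>\<close> iff every first index lies below every second index: if so, \<open>c\<^sub>K\<close> for the largest
  first index \<open>K\<close> realizes them all; conversely \<open>\<phi>(x; a\<^sub>k) \<and> \<psi>(x; a\<^sub>l)\<close> is inconsistent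
  for \<open>l \<le> k\<close> by (1) and (3).  This condition is visibly a conjunction of conditions on
  pairs, giving support 2, and \<open>\<alpha>\<^sub>i = (a\<^sub>i\<^sub>+\<^sub>1, b)\<close>, \<open>\<beta>\<^sub>j = (a\<^sub>0, a\<^sub>j\<^sub>+\<^sub>1)\<close> witness the
  \<open>\<infinity>\<close>-compatible order property.\<close>

fun rename_trm :: "(nat \<Rightarrow> nat) \<Rightarrow> 'f trm \<Rightarrow> 'f trm" where
  "rename_trm s (Var n) = Var (s n)"
| "rename_trm s (Fun f ts) = Fun f (map (rename_trm s) ts)"

fun rename_fm :: "(nat \<Rightarrow> nat) \<Rightarrow> ('f, 'p) fm \<Rightarrow> ('f, 'p) fm" where
  "rename_fm s Bot = Bot"
| "rename_fm s (Atom p ts) = Atom p (map (rename_trm s) ts)"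
| "rename_fm s (Eq t u) = Eq (rename_trm s t) (rename_trm s u)"
| "rename_fm s (Neg \<theta>) = Neg (rename_fm s \<theta>)"
| "rename_fm s (Conj \<theta> \<chi>) = Conj (rename_fm s \<theta>) (rename_fm s \<chi>)"
| "rename_fm s (Ex x \<theta>) = Ex (s x) (rename_fm s \<theta>)"

lemma evalt_rename_trm: "evalt F e (rename_trm s t) = evalt F (e \<circ> s) t"
  by (induction t) (auto cong: map_cong)

lemma sat_rename_fm: "inj s \<Longrightarrow> sat M e (rename_fm s \<theta>) = sat M (e \<circ> s) \<theta>"
proof (induction \<theta> arbitrary: e)
  case (Ex x \<theta>)
  have "\<And>d. e(s x := d) \<circ> s = (e \<circ> s)(x := d)"
    using Ex.prems by (auto simp: fun_eq_iff inj_eq)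
  then show ?case using Ex.IH[OF Ex.prems] by (simp only: rename_fm.simps sat.simps)
qed (auto simp: evalt_rename_trm comp_def)

lemma evalt_cong: "\<forall>x\<in>fvt t. e x = e' x \<Longrightarrow> evalt F e t = evalt F e' t"
  by (induction t) (auto cong: map_cong)

lemma sat_cong: "\<forall>x\<in>fv \<theta>. e x = e' x \<Longrightarrow> sat M e \<theta> = sat M e' \<theta>"
proof (induction \<theta> arbitrary: e e')
  case (Atom p ts)
  have "map (evalt (FnI M) e) ts = map (evalt (FnI M) e') ts"
    by (rule map_cong[OF refl], rule evalt_cong) (use Atom in auto)
  then show ?case by (simp only: sat.simps)
next
  case (Eq t u)
  then show ?case using evalt_cong[of t e e'] evalt_cong[of u e e'] by auto
next
  case (Ex x \<theta>)
  have "\<And>d. sat M (e(x := d)) \<theta> = sat M (e'(x := d)) \<theta>"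
    by (rule Ex.IH) (use Ex.prems in auto)
  then show ?case by simp
next
  case (Conj \<theta> \<chi>)
  have "sat M e \<theta> = sat M e' \<theta>" by (rule Conj.IH(1)) (use Conj.prems in auto)
  moreover have "sat M e \<chi> = sat M e' \<chi>" by (rule Conj.IH(2)) (use Conj.prems in auto)
  ultimately show ?case by simp
qed auto

definition swap_blocks :: "nat \<Rightarrow> nat \<Rightarrow> nat \<Rightarrow> nat" where
  "swap_blocks n m i = (if i < n then m + i else if i < n + m then i - n else i)"

lemma inj_swap_blocks: "inj (swap_blocks n m)"
  unfolding swap_blocks_def inj_def by auto

lemma holds_rename_swap_blocks:
  assumes "fv \<theta> \<subseteq> {..< n + m}" and "length c = n" and "length b = m"
  shows "holds M (rename_fm (swap_blocks n m) \<theta>) (b @ c) \<longleftrightarrow> holds M \<theta> (c @ b)"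
proof -
  let ?e = "\<lambda>i. if i < length (b @ c) then (b @ c) ! i else undefined"
  let ?e' = "\<lambda>i. if i < length (c @ b) then (c @ b) ! i else undefined"
  have "holds M (rename_fm (swap_blocks n m) \<theta>) (b @ c) \<longleftrightarrow> sat M (?e \<circ> swap_blocks n m) \<theta>"
    unfolding holds_def by (rule sat_rename_fm[OF inj_swap_blocks])
  also have "\<dots> \<longleftrightarrow> sat M ?e' \<theta>"
    using assms by (intro sat_cong) (auto simp: swap_blocks_def nth_append)
  finally show ?thesis unfolding holds_def .
qed

text \<open>Saturation only realizes types in the \<^emph>\<open>first\<close> block of variables; swapping the
  two blocks of \<open>\<theta>\<close> lets it realize a common second argument.\<close>

lemma aleph1_saturated_common_parameter:
  fixes c :: "'i :: countable \<Rightarrow> 'a list"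
  assumes "aleph1_saturated M" and fv: "fv \<theta> \<subseteq> {..< n + m}"
    and len: "\<And>j. length (c j) = n"
    and fin: "\<And>J. finite J \<Longrightarrow> \<exists>b. length b = m \<and> (\<forall>j\<in>J. holds M \<theta> (c j @ b))"
  shows "\<exists>b. length b = m \<and> (\<forall>j. holds M \<theta> (c j @ b))"
proof -
  define \<theta>' where "\<theta>' = rename_fm (swap_blocks n m) \<theta>"
  have swap: "length b = m \<Longrightarrow> holds M \<theta>' (b @ c j) \<longleftrightarrow> holds M \<theta> (c j @ b)" for b j
    unfolding \<theta>'_def by (rule holds_rename_swap_blocks[OF fv len])
  define \<Sigma> where "\<Sigma> = range (\<lambda>j. (\<theta>', c j))"
  have "(\<Union>(\<chi>, p)\<in>\<Sigma>. set p) = (\<Union>j. set (c j))"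
    unfolding \<Sigma>_def by auto
  then have "countable (\<Union>(\<chi>, p)\<in>\<Sigma>. set p)"
    by (simp add: countable_finite)
  moreover have "\<exists>b. length b = m \<and> (\<forall>(\<chi>, p)\<in>F. holds M \<chi> (b @ p))"
    if F: "F \<subseteq> \<Sigma>" "finite F" for F
  proof -
    obtain J where J: "finite J" "F = (\<lambda>j. (\<theta>', c j)) ` J"
      using finite_subset_image[OF F(2) F(1)[unfolded \<Sigma>_def]] by blast
    obtain b where "length b = m" "\<forall>j\<in>J. holds M \<theta> (c j @ b)"
      using fin[OF J(1)] by blast
    then show ?thesis using swap unfolding J(2) by auto
  qed
  ultimately obtain b where b: "length b = m" "\<forall>(\<chi>, p)\<in>\<Sigma>. holds M \<chi> (b @ p)"
    using assms(1) unfolding aleph1_saturated_def by blast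
  then have "holds M \<theta> (c j @ b)" for j
    using swap[OF b(1)] unfolding \<Sigma>_def by auto
  then show ?thesis using b(1) by blast
qed

definition ladder_param :: "(enat \<Rightarrow> 'a) \<Rightarrow> nat \<times> enat \<Rightarrow> 'a \<times> 'a" where
  "ladder_param e p = (e (enat (fst p)), e (snd p))"

definition ladder :: "(nat \<times> enat) set" where
  "ladder = {p. enat (fst p) < snd p}"

lemma charP_ladder_param_iff:
  fixes e :: "enat \<Rightarrow> 'a list" and c :: "nat \<Rightarrow> 'a list"
  assumes len: "\<And>j. length (c j) = nx"
    and phi: "\<And>i j. i \<le> j \<Longrightarrow> holds M \<phi> (c j @ e (enat i))"
    and psi: "\<And>j l. enat j < l \<Longrightarrow> holds M \<psi> (c j @ e l)"
    and incons: "\<And>k l d. l \<le> enat k \<Longrightarrow> length d = nx \<Longrightarrow>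
                   \<not> (holds M \<phi> (d @ e (enat k)) \<and> holds M \<psi> (d @ e l))"
  shows "charP M nx \<phi> \<psi> (map (ladder_param e) ps) \<longleftrightarrow>
           (\<forall>p\<in>set ps. \<forall>q\<in>set ps. enat (fst p) < snd q)"
proof
  assume "charP M nx \<phi> \<psi> (map (ladder_param e) ps)"
  then obtain d where d: "length d = nx" "\<And>p. p \<in> set ps \<Longrightarrow> rho M \<phi> \<psi> d (ladder_param e p)"
    unfolding charP_def by auto
  show "\<forall>p\<in>set ps. \<forall>q\<in>set ps. enat (fst p) < snd q"
  proof (intro ballI)
    fix p q assume "p \<in> set ps" "q \<in> set ps"
    then have "holds M \<phi> (d @ e (enat (fst p)))" "holds M \<psi> (d @ e (snd q))"
      using d(2) unfolding rho_def ladder_param_def by auto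
    then show "enat (fst p) < snd q" using incons[OF _ d(1)] not_less by blast
  qed
next
  assume below: "\<forall>p\<in>set ps. \<forall>q\<in>set ps. enat (fst p) < snd q"
  obtain K where K: "\<And>p. p \<in> set ps \<Longrightarrow> fst p \<le> K" "\<And>q. q \<in> set ps \<Longrightarrow> enat K < snd q"
  proof (cases "ps = []")
    case False
    define K where "K = Max (fst ` set ps)"
    have le_K: "fst p \<le> K" if "p \<in> set ps" for p
      unfolding K_def using that by simp
    have "K \<in> fst ` set ps"
      unfolding K_def using False by simp
    then obtain p where "p \<in> set ps" "fst p = K" by auto
    then have K_less: "enat K < snd q" if "q \<in> set ps" for q
      using below that by auto
    from le_K K_less show ?thesis by (rule that)
  qed simp
  have "rho M \<phi> \<psi> (c K) (ladder_param e p)" if "p \<in> set ps" for p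
    using phi[OF K(1)] psi[OF K(2)] that unfolding rho_def ladder_param_def by simp
  then show "charP M nx \<phi> \<psi> (map (ladder_param e) ps)"
    unfolding charP_def by (intro exI[of _ "c K"]) (auto simp: len)
qed

lemma ex_map_in_image:
  assumes "set ws \<subseteq> f ` A"
  shows "\<exists>ps. set ps \<subseteq> A \<and> ws = map f ps"
  using assms
proof (induction ws)
  case (Cons w ws)
  then obtain p ps where "p \<in> A" "w = f p" "set ps \<subseteq> A" "ws = map f ps" by auto
  then show ?case by (intro exI[of _ "p # ps"]) auto
qed simp

lemma support2_on_ladder:
  assumes "\<And>ps. charP M nx \<phi> \<psi> (map (ladder_param e) ps) \<longleftrightarrow>
                 (\<forall>p\<in>set ps. \<forall>q\<in>set ps. enat (fst p) < snd q)"
  shows "support2_on M nx \<phi> \<psi> (ladder_param e ` ladder)"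
  unfolding support2_on_def
proof (intro allI impI)
  fix ws assume "set ws \<subseteq> ladder_param e ` ladder"
  then obtain ps where ps: "ws = map (ladder_param e) ps" "set ps \<subseteq> ladder"
    using ex_map_in_image by metis
  have diag: "\<forall>p\<in>set ps. enat (fst p) < snd p" using ps(2) unfolding ladder_def by auto
  have "charP M nx \<phi> \<psi> ws \<longleftrightarrow> (\<forall>p\<in>set ps. \<forall>q\<in>set ps. enat (fst p) < snd q)"
    unfolding ps(1) assms ..
  also have "\<dots> \<longleftrightarrow> (\<forall>p\<in>set ps. \<forall>q\<in>set ps. charP M nx \<phi> \<psi> (map (ladder_param e) [p, q]))"
    unfolding assms using diag by auto
  also have "\<dots> \<longleftrightarrow> (\<forall>u\<in>set ws. \<forall>v\<in>set ws. charP M nx \<phi> \<psi> [u, v])"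
    unfolding ps(1) by simp
  finally show "charP M nx \<phi> \<psi> ws \<longleftrightarrow> (\<forall>u\<in>set ws. \<forall>v\<in>set ws. charP M nx \<phi> \<psi> [u, v])" .
qed

lemma set_concat_map2_pairs:
  "length xs = length ys \<Longrightarrow>
   set (concat (map2 (\<lambda>i j. [f i, g j]) xs ys)) = f ` set xs \<union> g ` set ys"
  by (induction xs ys rule: list_induct2) auto

lemma concat_map2_pairs_map:
  "concat (map2 (\<lambda>i j. [h (f i), h (g j)]) xs ys) = map h (concat (map2 (\<lambda>i j. [f i, g j]) xs ys))"
  by (induction xs arbitrary: ys) (auto simp: zip_Cons1 split: list.split)

lemma inf_cop_on_ladder:
  assumes "\<And>ps. charP M nx \<phi> \<psi> (map (ladder_param e) ps) \<longleftrightarrow>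
                 (\<forall>p\<in>set ps. \<forall>q\<in>set ps. enat (fst p) < snd q)"
  shows "inf_cop_on M nx \<phi> \<psi> (ladder_param e ` ladder)"
proof -
  define \<alpha> where "\<alpha> i = (Suc i, \<infinity> :: enat)" for i :: nat
  define \<beta> where "\<beta> j = (0 :: nat, enat (Suc j))" for j :: nat
  have "charP M nx \<phi> \<psi> (concat (map2 (\<lambda>i j. [ladder_param e (\<alpha> i), ladder_param e (\<beta> j)]) is js))
          \<longleftrightarrow> Max (set is) < Min (set js)"
    if len: "length is = length js" and "is \<noteq> []" for "is" js
  proof -
    have "js \<noteq> []" using that by auto
    have "charP M nx \<phi> \<psi> (concat (map2 (\<lambda>i j. [ladder_param e (\<alpha> i), ladder_param e (\<beta> j)]) is js))
          \<longleftrightarrow> (\<forall>p\<in>\<alpha> ` set is \<union> \<beta> ` set js. \<forall>q\<in>\<alpha> ` set is \<union> \<beta> ` set js. enat (fst p) < snd q)"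
      unfolding concat_map2_pairs_map assms set_concat_map2_pairs[OF len] ..
    also have "\<dots> \<longleftrightarrow> (\<forall>i\<in>set is. \<forall>j\<in>set js. i < j)"
      unfolding \<alpha>_def \<beta>_def by (simp add: ball_Un)
    also have "\<dots> \<longleftrightarrow> Max (set is) < Min (set js)"
      using \<open>is \<noteq> []\<close> \<open>js \<noteq> []\<close> by (auto simp: Max_less_iff Min_gr_iff)
    finally show ?thesis .
  qed
  moreover have "\<alpha> i \<in> ladder" "\<beta> i \<in> ladder" for i
    unfolding \<alpha>_def \<beta>_def ladder_def by auto
  ultimately show ?thesis
    unfolding inf_cop_on_def
    by (intro exI[of _ "ladder_param e \<circ> \<alpha>"] exI[of _ "ladder_param e \<circ> \<beta>"]) auto
qed

definition extend_seq :: "(nat \<Rightarrow> 'a) \<Rightarrow> 'a \<Rightarrow> enat \<Rightarrow> 'a" where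
  "extend_seq a b l = (case l of enat i \<Rightarrow> a i | \<infinity> \<Rightarrow> b)"

lemma aleph1_saturated_limit_parameter:
  fixes c a :: "nat \<Rightarrow> 'a list"
  assumes "aleph1_saturated M" and "fv \<psi> \<subseteq> {..< nx + ny}"
    and "\<And>j. length (c j) = nx" and "\<And>i. length (a i) = ny"
    and psi: "\<And>i j. j < i \<Longrightarrow> holds M \<psi> (c j @ a i)"
  shows "\<exists>b. length b = ny \<and> (\<forall>j. holds M \<psi> (c j @ b))"
proof (rule aleph1_saturated_common_parameter[OF assms(1-3)])
  fix J :: "nat set" assume "finite J"
  then obtain N where "J \<subseteq> {..<N}" using finite_nat_bounded by blast
  then have "\<forall>j\<in>J. holds M \<psi> (c j @ a N)" using psi by blast
  then show "\<exists>b. length b = ny \<and> (\<forall>j\<in>J. holds M \<psi> (c j @ b))" using assms(4) by blast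
qed

lemma charP_ladder_param_extend_seq_iff:
  assumes len_a: "\<And>i. length (a i) = ny" and len_c: "\<And>j. length (c j) = nx"
    and phi: "\<And>i j. i \<le> j \<Longrightarrow> holds M \<phi> (c j @ a i)"
    and psi: "\<And>i j. j < i \<Longrightarrow> holds M \<psi> (c j @ a i)"
    and psi_b: "\<And>j. holds M \<psi> (c j @ b)"
    and sop1: "\<not> (\<exists>d y. length d = nx \<and> length y = ny \<and> holds M \<phi> (d @ y) \<and> holds M \<psi> (d @ y))"
    and sop3: "\<forall>i j. i < j \<longrightarrow> \<not> (\<exists>d. length d = nx \<and> holds M \<phi> (d @ a j) \<and> holds M \<psi> (d @ a i))"
  shows "charP M nx \<phi> \<psi> (map (ladder_param (extend_seq a b)) ps) \<longleftrightarrow>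
           (\<forall>p\<in>set ps. \<forall>q\<in>set ps. enat (fst p) < snd q)"
proof (rule charP_ladder_param_iff[OF len_c])
  show "holds M \<psi> (c j @ extend_seq a b l)" if "enat j < l" for j l
    using that psi_b psi by (cases l) (auto simp: extend_seq_def)
  show "\<not> (holds M \<phi> (d @ extend_seq a b (enat k)) \<and> holds M \<psi> (d @ extend_seq a b l))"
    if le: "l \<le> enat k" and len_d: "length d = nx" for k l d
  proof (cases l)
    case (enat m)
    then consider "m < k" | "m = k" using le by force
    then show ?thesis
      using sop1 sop3 len_a len_d unfolding enat extend_seq_def by cases auto
  qed (use le in simp)
qed (simp add: phi extend_seq_def)

theorem mainTheorem8:
  fixes M :: "('f, 'p, 'a) struc"
    and \<phi> \<psi> :: "('f, 'p) fm"
    and nx ny :: nat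
    and a :: "nat \<Rightarrow> 'a list"
  assumes sat: "aleph1_saturated M"
    and fv_phi: "fv \<phi> \<subseteq> {..< nx + ny}"
    and fv_psi: "fv \<psi> \<subseteq> {..< nx + ny}"
    and ind: "indiscernible M ny a"
    and sop1: "\<not> (\<exists>c b. length c = nx \<and> length b = ny \<and> holds M \<phi> (c @ b) \<and> holds M \<psi> (c @ b))"
    and sop2: "\<exists>c :: nat \<Rightarrow> 'a list. \<forall>j. length (c j) = nx \<and>
                  (\<forall>i. (i \<le> j \<longrightarrow> holds M \<phi> (c j @ a i)) \<and> (j < i \<longrightarrow> holds M \<psi> (c j @ a i)))"
    and sop3: "\<forall>i j. i < j \<longrightarrow>
                  \<not> (\<exists>c. length c = nx \<and> holds M \<phi> (c @ a j) \<and> holds M \<psi> (c @ a i))"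
  shows "\<exists>A' \<subseteq> P1 M nx ny \<phi> \<psi>. inf_cop_on M nx \<phi> \<psi> A' \<and> support2_on M nx \<phi> \<psi> A'"
proof -
  obtain c :: "nat \<Rightarrow> 'a list" where c: "\<And>j. length (c j) = nx"
    "\<And>i j. i \<le> j \<Longrightarrow> holds M \<phi> (c j @ a i)" "\<And>i j. j < i \<Longrightarrow> holds M \<psi> (c j @ a i)"
    using sop2 by metis
  have len_a: "\<And>i. length (a i) = ny" using ind unfolding indiscernible_def by blast
  have "\<exists>b. length b = ny \<and> (\<forall>j. holds M \<psi> (c j @ b))"
    by (rule aleph1_saturated_limit_parameter[OF sat fv_psi c(1) len_a]) (rule c(3))
  then obtain b where b: "length b = ny" "\<And>j. holds M \<psi> (c j @ b)" by blast
  let ?A' = "ladder_param (extend_seq a b) ` ladder"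
  note key = charP_ladder_param_extend_seq_iff[OF len_a c b(2) sop1 sop3]
  have len_ext: "length (extend_seq a b l) = ny" for l
    using len_a b(1) by (cases l) (simp_all add: extend_seq_def)
  have "ladder_param (extend_seq a b) p \<in> P1 M nx ny \<phi> \<psi>" if "p \<in> ladder" for p
    using key[where ps="[p]"] that len_ext by (simp add: P1_def ladder_def ladder_param_def)
  then have "?A' \<subseteq> P1 M nx ny \<phi> \<psi>" by blast
  moreover note inf_cop_on_ladder[OF key] support2_on_ladder[OF key]
  ultimately show ?thesis by (intro exI conjI)
qed

end
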